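(* Let $\lambda\ge1$ and $\phi=e^{\lambda\psi}$. There exist $h_1=h_1(\lambda)>0$ and $C_\lambda>0$ such that for all $0<h\le h_1$, all $\tau>0$, $0<\delta<1/2$, $\Delta t>0$, and every fully-discrete function $z=(z^{n+1/2})_{n=0}^M$ with $z^{n+1/2}_0=z^{n+1/2}_{N+1}=0$, writing $s=\tau\theta$, $$ \begin{aligned} \tau\lambda^2\iint_Q\bar{\mathtt t}^-(\theta)\phi|\partial_h\bar{\mathtt t}^-z|^2&\ge\tau\lambda^2\iint_Q\bar{\mathtt t}^-(\theta)\phi|\overline{\partial_h\bar{\mathtt t}^-z}|^2+\frac{h^2\tau\lambda^2}{4}\iint_Q\bar{\mathtt t}^-(\theta)\phi|\Delta_h\bar{\mathtt t}^-z|^2\\ &\quad-C_\lambda h^2\iint_Q\bar{\mathtt t}^-(s)|\partial_h\bar{\mathtt t}^-z|^2-C_\lambda\iint_Q\bar{\mathtt t}^-(sh)|\overline{\partial_h\bar{\mathtt t}^-z}|^2-C_\lambda h^4\iint_Q\bar{\mathtt t}^-(s)|\Delta_h\bar{\mathtt t}^-z|^2. \end{aligned} $$ (In the first integral $\phi$ is sampled at the dual points $x_{i+1/2}$, in the others at the primal points $x_i$.)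
   Context: Grids: $\Omega=(0,L)$, $h=L/(N+1)$, $\Delta t=T/M$, $x_i=ih$, $x_{i+1/2}=(i+\frac12)h$, $t_{n\pm1/2}=(n\pm\frac12)\Delta t$. For a primal space function $u$: $(\partial_hu)_{i+1/2}=(u_{i+1}-u_i)/h$ ($i=0,\dots,N$), $\overline{\partial_h u}_i=(u_{i+1}-u_{i-1})/(2h)$ and $(\Delta_hu)_i=(u_{i+1}-2u_i+u_{i-1})/h^2$ ($i=1,\dots,N$). $\int_\Omega$ of a primal function is $\sum_{i=1}^Nh u_i$, of a dual function $\sum_{i=0}^Nhv_{i+1/2}$. For $n=1,\dots,M$, $(\bar{\mathtt t}^-z)^n=z^{n-1/2}$ and $\bar{\mathtt t}^-(f)$ is a continuous $f$ evaluated at $t_{n-1/2}$; $\iint_QF=\sum_{n=1}^M\Delta t\int_\Omega F^n$. Weights: $\psi\in C^k(\overline{\tilde\Omega})$, $k$ large, positive on an open interval $\tilde\Omega\supset[0,L]$; $\theta(t)=1/((t+\delta T)(T+\delta T-t))$. *)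

theory Defs
  imports "HOL-Analysis.Analysis"
begin

definition Ck_on :: "nat \<Rightarrow> real set \<Rightarrow> (real \<Rightarrow> real) \<Rightarrow> bool" where
  "Ck_on k S f \<longleftrightarrow>
     (\<forall>j<k. \<forall>x\<in>S. (deriv ^^ j) f differentiable (at x)) \<and>
     (\<forall>j\<le>k. continuous_on S ((deriv ^^ j) f))"

definition theta :: "real \<Rightarrow> real \<Rightarrow> real \<Rightarrow> real" where
  "theta T \<delta> t = 1 / ((t + \<delta> * T) * (T + \<delta> * T - t))"

definition tmid :: "real \<Rightarrow> nat \<Rightarrow> real" where
  "tmid dt n = (real n - 1/2) * dt"

text \<open>Discrete operators on a primal function u (u i = u_i).
  Dp h u i is the value at the dual point x_{i+1/2}.\<close>
definition Dp :: "real \<Rightarrow> (nat \<Rightarrow> real) \<Rightarrow> nat \<Rightarrow> real" where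
  "Dp h u i = (u (i + 1) - u i) / h"

definition Dc :: "real \<Rightarrow> (nat \<Rightarrow> real) \<Rightarrow> nat \<Rightarrow> real" where
  "Dc h u i = (u (i + 1) - u (i - 1)) / (2 * h)"

definition Lap :: "real \<Rightarrow> (nat \<Rightarrow> real) \<Rightarrow> nat \<Rightarrow> real" where
  "Lap h u i = (u (i + 1) - 2 * u i + u (i - 1)) / h ^ 2"

text \<open>Space-time discrete integrals; F n i is the value at time index n and
  space index i (i = 1..N primal, i = 0..N dual meaning x_{i+1/2}).\<close>
definition Qint_primal :: "nat \<Rightarrow> nat \<Rightarrow> real \<Rightarrow> real \<Rightarrow> (nat \<Rightarrow> nat \<Rightarrow> real) \<Rightarrow> real" where
  "Qint_primal M N dt h F = (\<Sum>n = 1..M. dt * (\<Sum>i = 1..N. h * F n i))"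

definition Qint_dual :: "nat \<Rightarrow> nat \<Rightarrow> real \<Rightarrow> real \<Rightarrow> (nat \<Rightarrow> nat \<Rightarrow> real) \<Rightarrow> real" where
  "Qint_dual M N dt h F = (\<Sum>n = 1..M. dt * (\<Sum>i = 0..N. h * F n i))"

end

theory Submission
  imports Defs
begin

text \<open>Pointwise, |Dc u|^2 + h^2/4 |Lap u|^2 is the average of the squared one-sided
  differences on both sides of x_i. Summing against the primal weight \<phi>(x_i) and shifting
  the index turns this average onto the dual points, where it is weighted by
  (\<phi>(x_i) + \<phi>(x_{i+1}))/2 instead of \<phi>(x_{i+1/2}); the two differ by at most
  sup |\<phi>''| h^2/4, which is absorbed by the C h^2 term.\<close>

lemma Ck_on_2_has_derivatives:
  assumes "Ck_on k S f" "2 \<le> k" "x \<in> S"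
  shows "(f has_real_derivative deriv f x) (at x)"
    and "(deriv f has_real_derivative deriv (deriv f) x) (at x)"
proof -
  have "\<And>j. j < k \<Longrightarrow> (deriv ^^ j) f differentiable (at x)"
    using assms unfolding Ck_on_def by blast
  from this[of 0] this[of 1] assms(2) show "(f has_real_derivative deriv f x) (at x)"
    and "(deriv f has_real_derivative deriv (deriv f) x) (at x)"
    by (simp_all add: DERIV_deriv_iff_real_differentiable)
qed

lemma Ck_on_2_continuous:
  assumes "Ck_on k S f" "2 \<le> k"
  shows "continuous_on S f" "continuous_on S (deriv f)" "continuous_on S (deriv (deriv f))"
proof -
  have "continuous_on S ((deriv ^^ j) f)" if "j \<le> 2" for j
    using assms that unfolding Ck_on_def by auto
  from this[of 0] this[of 1] this[of 2] show
    "continuous_on S f" "continuous_on S (deriv f)" "continuous_on S (deriv (deriv f))"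
    by (simp_all add: numeral_2_eq_2)
qed

lemma second_difference_le:
  fixes G G' G'' :: "real \<Rightarrow> real"
  assumes G': "\<And>x. lo \<le> x \<Longrightarrow> x \<le> hi \<Longrightarrow> (G has_real_derivative G' x) (at x)"
    and G'': "\<And>x. lo \<le> x \<Longrightarrow> x \<le> hi \<Longrightarrow> (G' has_real_derivative G'' x) (at x)"
    and bound: "\<And>x. lo \<le> x \<Longrightarrow> x \<le> hi \<Longrightarrow> \<bar>G'' x\<bar> \<le> B"
    and "lo \<le> m - d" "m + d \<le> hi" "d > 0"
  shows "G (m - d) + G (m + d) - 2 * G m \<le> 2 * B * d\<^sup>2"
proof -
  obtain x1 where x1: "m < x1" "x1 < m + d" "G (m + d) - G m = d * G' x1"
    using MVT2[of m "m + d" G G'] G' assms by force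
  obtain x2 where x2: "m - d < x2" "x2 < m" "G m - G (m - d) = d * G' x2"
    using MVT2[of "m - d" m G G'] G' assms by force
  obtain y where y: "x2 < y" "y < x1" "G' x1 - G' x2 = (x1 - x2) * G'' y"
    using MVT2[of x2 x1 G' G''] G'' assms x1 x2 by force
  have "\<bar>G'' y\<bar> \<le> B"
    using bound y x1 x2 assms(4,5) by simp
  then have "(x1 - x2) * G'' y \<le> (x1 - x2) * B"
    using x1 x2 by (intro mult_left_mono) auto
  also have "\<dots> \<le> (2 * d) * B"
    using x1 x2 \<open>\<bar>G'' y\<bar> \<le> B\<close> by (intro mult_right_mono) auto
  finally have "(x1 - x2) * G'' y \<le> (2 * d) * B" .
  then have "d * (G' x1 - G' x2) \<le> d * (2 * d * B)"
    using y \<open>d > 0\<close> by (intro mult_left_mono) auto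
  moreover have "G (m - d) + G (m + d) - 2 * G m = d * (G' x1 - G' x2)"
    using x1 x2 by (simp add: algebra_simps)
  ultimately show ?thesis
    by (simp add: power2_eq_square algebra_simps)
qed

lemma second_difference_bounded:
  fixes G G' G'' :: "real \<Rightarrow> real"
  assumes "\<And>x. lo \<le> x \<Longrightarrow> x \<le> hi \<Longrightarrow> (G has_real_derivative G' x) (at x)"
    and "\<And>x. lo \<le> x \<Longrightarrow> x \<le> hi \<Longrightarrow> (G' has_real_derivative G'' x) (at x)"
    and "continuous_on {lo..hi} G''"
  shows "\<exists>B \<ge> 0. \<forall>m d. 0 < d \<longrightarrow> lo \<le> m - d \<longrightarrow> m + d \<le> hi \<longrightarrow>
           G (m - d) + G (m + d) - 2 * G m \<le> 2 * B * d\<^sup>2"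
proof -
  have "bounded (G'' ` {lo..hi})"
    using assms(3) by (intro compact_imp_bounded compact_continuous_image) auto
  then obtain B where "B > 0" and B: "\<And>x. x \<in> {lo..hi} \<Longrightarrow> \<bar>G'' x\<bar> \<le> B"
    by (auto simp: bounded_pos)
  show ?thesis
    using \<open>B > 0\<close> B second_difference_le[OF assms(1,2), where B=B] by (intro exI[of _ B]) auto
qed

lemma exp_Ck_on_second_difference_bounded:
  fixes \<psi> :: "real \<Rightarrow> real"
  assumes "Ck_on k S \<psi>" "2 \<le> k" "{lo..hi} \<subseteq> S"
  shows "\<exists>B \<ge> 0. \<forall>m d. 0 < d \<longrightarrow> lo \<le> m - d \<longrightarrow> m + d \<le> hi \<longrightarrow>
    exp (lam * \<psi> (m - d)) + exp (lam * \<psi> (m + d)) - 2 * exp (lam * \<psi> m) \<le> 2 * B * d\<^sup>2"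
proof (rule second_difference_bounded)
  let ?\<psi>' = "deriv \<psi>" and ?\<psi>'' = "deriv (deriv \<psi>)"
  fix x assume "lo \<le> x" "x \<le> hi"
  then have "x \<in> S" using assms(3) by auto
  note d = Ck_on_2_has_derivatives[OF assms(1,2) this]
  show "((\<lambda>x. exp (lam * \<psi> x)) has_real_derivative exp (lam * \<psi> x) * (lam * ?\<psi>' x)) (at x)"
    using d by (auto intro!: derivative_eq_intros)
  show "((\<lambda>x. exp (lam * \<psi> x) * (lam * ?\<psi>' x)) has_real_derivative
      exp (lam * \<psi> x) * (lam * ?\<psi>' x) * (lam * ?\<psi>' x) + exp (lam * \<psi> x) * (lam * ?\<psi>'' x)) (at x)"
    using d by (auto intro!: derivative_eq_intros simp: algebra_simps)
next
  show "continuous_on {lo..hi} (\<lambda>x. exp (lam * \<psi> x) * (lam * deriv \<psi> x) * (lam * deriv \<psi> x)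
      + exp (lam * \<psi> x) * (lam * deriv (deriv \<psi>) x))"
    using Ck_on_2_continuous[OF assms(1,2)] continuous_on_subset[OF _ assms(3)]
    by (intro continuous_intros) auto
qed

lemma Dc_sq_plus_Lap_sq:
  assumes "h > 0" "1 \<le> i"
  shows "Dc h u i ^ 2 + h\<^sup>2 / 4 * Lap h u i ^ 2 = (Dp h u i ^ 2 + Dp h u (i - 1) ^ 2) / 2"
proof -
  have "i - 1 + 1 = i" using assms by simp
  then show ?thesis
    using assms unfolding Dc_def Lap_def Dp_def by (simp add: field_simps power2_eq_square)
qed

lemma sum_adjacent_weights:
  fixes P e :: "nat \<Rightarrow> real"
  shows "(\<Sum>j = 0..N. (P j + P (Suc j)) * e j) =
    (\<Sum>i = 1..N. P i * (e i + e (i - 1))) + P 0 * e 0 + P (Suc N) * e N"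
proof (induction N)
  case 0
  then show ?case by (simp add: algebra_simps)
next
  case (Suc N)
  then show ?case
    by (simp add: sum.cl_ivl_Suc sum.atLeast0_atMost_Suc algebra_simps)
qed

lemma weighted_Dp_sum_ge:
  fixes P D u :: "nat \<Rightarrow> real"
  assumes "h > 0" and P: "\<And>j. P j \<ge> 0"
    and D: "\<And>j. j \<le> N \<Longrightarrow> (P j + P (Suc j)) / 2 \<le> D j"
  shows "(\<Sum>i = 1..N. h * (P i * (Dc h u i ^ 2 + h\<^sup>2 / 4 * Lap h u i ^ 2)))
    \<le> (\<Sum>j = 0..N. h * (D j * Dp h u j ^ 2))"
proof -
  define e where "e j = Dp h u j ^ 2" for j
  have "(\<Sum>i = 1..N. h * (P i * (Dc h u i ^ 2 + h\<^sup>2 / 4 * Lap h u i ^ 2)))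
      = h / 2 * (\<Sum>i = 1..N. P i * (e i + e (i - 1)))"
    unfolding sum_distrib_left
  proof (intro sum.cong refl)
    fix i assume "i \<in> {1..N}"
    then show "h * (P i * (Dc h u i ^ 2 + h\<^sup>2 / 4 * Lap h u i ^ 2)) = h / 2 * (P i * (e i + e (i - 1)))"
      using Dc_sq_plus_Lap_sq[OF \<open>h > 0\<close>, of i u] by (simp add: e_def)
  qed
  also have "\<dots> \<le> h / 2 * (\<Sum>j = 0..N. (P j + P (Suc j)) * e j)"
    unfolding sum_adjacent_weights using P \<open>h > 0\<close> by (simp add: e_def)
  also have "\<dots> = (\<Sum>j = 0..N. h * ((P j + P (Suc j)) / 2 * e j))"
    unfolding sum_distrib_left by (intro sum.cong refl) simp
  also have "\<dots> \<le> (\<Sum>j = 0..N. h * (D j * e j))"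
    using D \<open>h > 0\<close> by (intro sum_mono mult_left_mono mult_right_mono) (auto simp: e_def)
  finally show ?thesis by (simp add: e_def)
qed

lemma midpoint_weight_ge_average:
  fixes \<phi> :: "real \<Rightarrow> real"
  assumes mid: "\<forall>m d. 0 < d \<longrightarrow> 0 \<le> m - d \<longrightarrow> m + d \<le> L \<longrightarrow>
      \<phi> (m - d) + \<phi> (m + d) - 2 * \<phi> m \<le> 2 * B * d\<^sup>2"
    and "h > 0" "real (N + 1) * h = L" "j \<le> N"
  shows "(\<phi> (real j * h) + \<phi> (real (Suc j) * h)) / 2 - B * h\<^sup>2 / 4 \<le> \<phi> ((real j + 1/2) * h)"
proof -
  have "real (Suc j) * h \<le> L"
    using assms(2-4) by (metis mult_right_mono of_nat_le_iff Suc_eq_plus1 Suc_le_mono less_imp_le)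
  then have "\<phi> ((real j + 1/2) * h - h / 2) + \<phi> ((real j + 1/2) * h + h / 2)
      - 2 * \<phi> ((real j + 1/2) * h) \<le> 2 * B * (h / 2)\<^sup>2"
    using mid[rule_format, of "h / 2" "(real j + 1/2) * h"] \<open>h > 0\<close>
    by (simp add: algebra_simps)
  then show ?thesis
    by (simp add: algebra_simps power2_eq_square)
qed

lemma midpoint_weighted_Dp_sum_ge:
  fixes \<phi> u :: "_ \<Rightarrow> real"
  assumes mid: "\<forall>m d. 0 < d \<longrightarrow> 0 \<le> m - d \<longrightarrow> m + d \<le> L \<longrightarrow>
      \<phi> (m - d) + \<phi> (m + d) - 2 * \<phi> m \<le> 2 * B * d\<^sup>2"
    and "h > 0" "real (N + 1) * h = L" "\<And>x. \<phi> x \<ge> 0" "c \<ge> 0" "c * B \<le> 4 * e"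
  shows "(\<Sum>i = 1..N. h * (c * \<phi> (real i * h) * (Dc h u i ^ 2 + h\<^sup>2 / 4 * Lap h u i ^ 2)))
    \<le> (\<Sum>j = 0..N. h * ((c * \<phi> ((real j + 1/2) * h) + e * h\<^sup>2) * Dp h u j ^ 2))"
proof (rule weighted_Dp_sum_ge)
  fix j assume "j \<le> N"
  have "c * ((\<phi> (real j * h) + \<phi> (real (Suc j) * h)) / 2 - B * h\<^sup>2 / 4)
      \<le> c * \<phi> ((real j + 1/2) * h)"
    using midpoint_weight_ge_average[OF mid assms(2,3) \<open>j \<le> N\<close>] \<open>c \<ge> 0\<close>
    by (rule mult_left_mono)
  moreover have "c * B * h\<^sup>2 \<le> 4 * e * h\<^sup>2"
    using \<open>c * B \<le> 4 * e\<close> by (simp add: mult_right_mono)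
  ultimately show "(c * \<phi> (real j * h) + c * \<phi> (real (Suc j) * h)) / 2
      \<le> c * \<phi> ((real j + 1/2) * h) + e * h\<^sup>2"
    by (simp add: algebra_simps)
qed (use assms in simp_all)

lemma Qint_dual_add:
  "Qint_dual M N dt h (\<lambda>n i. F n i + G n i) = Qint_dual M N dt h F + Qint_dual M N dt h G"
  unfolding Qint_dual_def by (simp add: sum.distrib distrib_left)

lemma Qint_dual_cmult:
  "Qint_dual M N dt h (\<lambda>n i. c * F n i) = c * Qint_dual M N dt h F"
  unfolding Qint_dual_def by (simp add: sum_distrib_left algebra_simps)

lemma Qint_primal_add:
  "Qint_primal M N dt h (\<lambda>n i. F n i + G n i) = Qint_primal M N dt h F + Qint_primal M N dt h G"
  unfolding Qint_primal_def by (simp add: sum.distrib distrib_left)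

lemma Qint_primal_cmult:
  "Qint_primal M N dt h (\<lambda>n i. c * F n i) = c * Qint_primal M N dt h F"
  unfolding Qint_primal_def by (simp add: sum_distrib_left algebra_simps)

lemma Qint_primal_nonneg:
  assumes "dt \<ge> 0" "h \<ge> 0" "\<And>n i. 1 \<le> n \<Longrightarrow> n \<le> M \<Longrightarrow> 0 \<le> F n i"
  shows "0 \<le> Qint_primal M N dt h F"
  unfolding Qint_primal_def using assms by (auto intro!: sum_nonneg mult_nonneg_nonneg)

lemma Qint_primal_le_Qint_dual:
  assumes "dt \<ge> 0"
    and "\<And>n. 1 \<le> n \<Longrightarrow> n \<le> M \<Longrightarrow> (\<Sum>i = 1..N. h * G n i) \<le> (\<Sum>i = 0..N. h * F n i)"
  shows "Qint_primal M N dt h G \<le> Qint_dual M N dt h F"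
  unfolding Qint_primal_def Qint_dual_def using assms by (auto intro!: sum_mono mult_left_mono)

lemma theta_pos:
  assumes "T > 0" "\<delta> > 0" "0 < t" "t < T"
  shows "theta T \<delta> t > 0"
proof -
  have "\<delta> * T > 0" using assms by simp
  then have "t + \<delta> * T > 0" "T + \<delta> * T - t > 0" using assms by linarith+
  then show ?thesis unfolding theta_def by simp
qed

lemma tmid_in_interval:
  assumes "dt > 0" "1 \<le> n" "n \<le> M"
  shows "0 < tmid dt n" "tmid dt n < real M * dt"
  using assms unfolding tmid_def by (auto intro!: mult_strict_right_mono)

lemma Qint_weighted_estimate:
  fixes \<phi> \<theta> :: "_ \<Rightarrow> real" and u :: "nat \<Rightarrow> nat \<Rightarrow> real"
  assumes mid: "\<forall>m d. 0 < d \<longrightarrow> 0 \<le> m - d \<longrightarrow> m + d \<le> L \<longrightarrow>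
      \<phi> (m - d) + \<phi> (m + d) - 2 * \<phi> m \<le> 2 * B * d\<^sup>2"
    and "h > 0" "real (N + 1) * h = L" "\<And>x. \<phi> x \<ge> 0"
    and "dt \<ge> 0" "\<tau> \<ge> 0" "\<And>n. 1 \<le> n \<Longrightarrow> n \<le> M \<Longrightarrow> \<theta> n \<ge> 0" "lam\<^sup>2 * B \<le> 4 * C"
  shows "\<tau> * lam\<^sup>2 * Qint_primal M N dt h (\<lambda>n i. \<theta> n * \<phi> (real i * h) * Dc h (u n) i ^ 2)
      + h\<^sup>2 * \<tau> * lam\<^sup>2 / 4 * Qint_primal M N dt h (\<lambda>n i. \<theta> n * \<phi> (real i * h) * Lap h (u n) i ^ 2)
    \<le> \<tau> * lam\<^sup>2 * Qint_dual M N dt h (\<lambda>n i. \<theta> n * \<phi> ((real i + 1/2) * h) * Dp h (u n) i ^ 2)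
      + C * h\<^sup>2 * Qint_dual M N dt h (\<lambda>n i. \<tau> * \<theta> n * Dp h (u n) i ^ 2)"
proof -
  have "Qint_primal M N dt h (\<lambda>n i. \<tau> * lam\<^sup>2 * (\<theta> n * \<phi> (real i * h) * Dc h (u n) i ^ 2)
        + h\<^sup>2 * \<tau> * lam\<^sup>2 / 4 * (\<theta> n * \<phi> (real i * h) * Lap h (u n) i ^ 2))
    \<le> Qint_dual M N dt h (\<lambda>n i. \<tau> * lam\<^sup>2 * (\<theta> n * \<phi> ((real i + 1/2) * h) * Dp h (u n) i ^ 2)
        + C * h\<^sup>2 * (\<tau> * \<theta> n * Dp h (u n) i ^ 2))"
  proof (rule Qint_primal_le_Qint_dual)
    fix n assume n: "1 \<le> n" "n \<le> M"
    have "\<tau> * lam\<^sup>2 * \<theta> n * B \<le> 4 * (C * \<tau> * \<theta> n)"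
      using mult_left_mono[OF \<open>lam\<^sup>2 * B \<le> 4 * C\<close>, of "\<tau> * \<theta> n"] assms(6) assms(7)[OF n]
      by (simp add: algebra_simps)
    from midpoint_weighted_Dp_sum_ge[OF mid assms(2-4) _ this, of "u n"]
    show "(\<Sum>i = 1..N. h * (\<tau> * lam\<^sup>2 * (\<theta> n * \<phi> (real i * h) * Dc h (u n) i ^ 2)
        + h\<^sup>2 * \<tau> * lam\<^sup>2 / 4 * (\<theta> n * \<phi> (real i * h) * Lap h (u n) i ^ 2)))
      \<le> (\<Sum>i = 0..N. h * (\<tau> * lam\<^sup>2 * (\<theta> n * \<phi> ((real i + 1/2) * h) * Dp h (u n) i ^ 2)
        + C * h\<^sup>2 * (\<tau> * \<theta> n * Dp h (u n) i ^ 2)))"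
      using assms(6) assms(7)[OF n] by (simp add: algebra_simps)
  qed (rule \<open>dt \<ge> 0\<close>)
  then show ?thesis
    unfolding Qint_primal_add Qint_dual_add Qint_primal_cmult Qint_dual_cmult .
qed

theorem lemma2:
  fixes L T a b lam :: real and k :: nat and \<psi> :: "real \<Rightarrow> real"
  assumes "L > 0" and "T > 0" and "a < 0" and "L < b"
    and "k \<ge> 2" and "Ck_on k {a<..<b} \<psi>" and "\<forall>x\<in>{a<..<b}. \<psi> x > 0"
    and "lam \<ge> 1"
  shows "\<exists>h1 > 0. \<exists>C > 0. \<forall>N M h dt \<tau> \<delta> (z :: nat \<Rightarrow> nat \<Rightarrow> real).
     h = L / real (N + 1) \<longrightarrow> h \<le> h1 \<longrightarrow> M \<ge> 1 \<longrightarrow> dt = T / real M \<longrightarrow>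
     \<tau> > 0 \<longrightarrow> 0 < \<delta> \<longrightarrow> \<delta> < 1/2 \<longrightarrow>
     (\<forall>n \<le> M. z n 0 = 0 \<and> z n (N + 1) = 0) \<longrightarrow>
     \<tau> * lam^2 * Qint_dual M N dt h (\<lambda>n i. theta T \<delta> (tmid dt n)
          * exp (lam * \<psi> ((real i + 1/2) * h)) * (Dp h (z (n - 1)) i)^2)
     \<ge> \<tau> * lam^2 * Qint_primal M N dt h (\<lambda>n i. theta T \<delta> (tmid dt n)
          * exp (lam * \<psi> (real i * h)) * (Dc h (z (n - 1)) i)^2)
       + h^2 * \<tau> * lam^2 / 4 * Qint_primal M N dt h (\<lambda>n i. theta T \<delta> (tmid dt n)
          * exp (lam * \<psi> (real i * h)) * (Lap h (z (n - 1)) i)^2)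
       - C * h^2 * Qint_dual M N dt h (\<lambda>n i. \<tau> * theta T \<delta> (tmid dt n)
          * (Dp h (z (n - 1)) i)^2)
       - C * Qint_primal M N dt h (\<lambda>n i. \<tau> * theta T \<delta> (tmid dt n) * h
          * (Dc h (z (n - 1)) i)^2)
       - C * h^4 * Qint_primal M N dt h (\<lambda>n i. \<tau> * theta T \<delta> (tmid dt n)
          * (Lap h (z (n - 1)) i)^2)"
proof -
  have "{0..L} \<subseteq> {a<..<b}" using assms(3,4) by auto
  from exp_Ck_on_second_difference_bounded[OF assms(6,5) this, of lam]
  obtain B where "B \<ge> 0" and mid: "\<forall>m d. 0 < d \<longrightarrow> 0 \<le> m - d \<longrightarrow> m + d \<le> L \<longrightarrow>
      exp (lam * \<psi> (m - d)) + exp (lam * \<psi> (m + d)) - 2 * exp (lam * \<psi> m) \<le> 2 * B * d\<^sup>2"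
    by blast
  define C where "C = lam\<^sup>2 * B / 4 + 1"
  have "C > 0" "lam\<^sup>2 * B \<le> 4 * C" using \<open>B \<ge> 0\<close> by (simp_all add: C_def add_nonneg_pos)
  show ?thesis
  proof (rule exI[of _ 1], intro conjI, simp, intro exI[of _ C] conjI allI impI, goal_cases)
    case (2 N M h dt \<tau> \<delta> z)
    then have "h > 0" "real (N + 1) * h = L" "dt > 0" "\<tau> > 0"
      using \<open>L > 0\<close> \<open>T > 0\<close> by auto
    have \<theta>: "0 \<le> theta T \<delta> (tmid dt n)" if "1 \<le> n" "n \<le> M" for n
      using tmid_in_interval[OF \<open>dt > 0\<close> that] 2 \<open>T > 0\<close> by (intro less_imp_le theta_pos) auto
    have "0 \<le> C * Qint_primal M N dt h (\<lambda>n i. \<tau> * theta T \<delta> (tmid dt n) * h * Dc h (z (n - 1)) i ^ 2)"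
      "0 \<le> C * h ^ 4 * Qint_primal M N dt h (\<lambda>n i. \<tau> * theta T \<delta> (tmid dt n) * Lap h (z (n - 1)) i ^ 2)"
      using \<open>C > 0\<close> \<open>dt > 0\<close> \<open>h > 0\<close> \<open>\<tau> > 0\<close> \<theta>
      by (auto intro!: mult_nonneg_nonneg Qint_primal_nonneg)
    with Qint_weighted_estimate[where \<theta> = "\<lambda>n. theta T \<delta> (tmid dt n)" and M = M
        and u = "\<lambda>n. z (n - 1)", OF mid \<open>h > 0\<close> \<open>real (N + 1) * h = L\<close> exp_ge_zero
        less_imp_le[OF \<open>dt > 0\<close>] less_imp_le[OF \<open>\<tau> > 0\<close>] \<theta> \<open>lam\<^sup>2 * B \<le> 4 * C\<close>]
    show ?case by linarith
  qed (rule \<open>C > 0\<close>)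
qed

end
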